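(* Let $\eta,\theta\in\mathbb{R}$, $\sigma,\tau\ge0$ with $\sigma\tau\ne1$, and $t>0$. The solution $\mathbb{H}_t=(h_0,h_1,\dots)\in\mathcal{Q}$ with $h_0=0$ of the equation $$(1+\sigma t)\mathbb{H}_t\mathbb{F}=\mathbb{E}+\eta\mathbb{F}+\sigma\mathbb{F}^2+(\theta-\eta t)\mathbb{H}_t-\sigma(t+\tau)\mathbb{F}\mathbb{H}_t+(t+\tau)(1+\sigma t)\mathbb{H}_t^2$$ is $$\mathbb{H}_t=\frac{1}{1+\sigma t}(\mathbb{E}+\eta\mathbb{F}+\sigma\mathbb{F}^2)\,\varphi_t(\mathbb{D})\,\mathbb{D},$$ where $\varphi_t(z)=\sum_{k=1}^\infty c_k(t)z^{k-1}$ satisfies $$(z^2+\eta z+\sigma)(t+\tau)\varphi_t^2+\big((\theta-t\eta)z-2t\sigma-\sigma\tau-1\big)\varphi_t+t\sigma+1=0$$ and $\varphi_t(0)=1$, and $\varphi_t(\mathbb{D})=\sum_{k\ge1}c_k(t)\mathbb{D}^{k-1}$.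
   Context: $\mathcal{Q}$ denotes the real linear space of all infinite sequences $\mathbb{P}=(p_0,p_1,\dots)$ of real polynomials in $x$, with product $\mathbb{P}\mathbb{Q}=\mathbb{R}=(r_0,r_1,\dots)$, $r_k(x)=\sum_{j=0}^{\deg q_k}[q_k]_j\,p_j(x)$ for $\mathbb{Q}=(q_0,q_1,\dots)$, where $[q]_j$ is the coefficient of $x^j$ in $q$ (corresponding to composition of linear maps of the polynomial space). Powers are with respect to this product. Special elements: $\mathbb{E}=(1,x,x^2,\dots)$ (identity), $\mathbb{F}=(x,x^2,\dots)$, $\mathbb{D}=(0,1,x,x^2,\dots)$. For a power series $\psi(z)=\sum_k a_kz^k$, $\psi(\mathbb{D})=\sum_ka_k\mathbb{D}^k$ is a well-defined element of $\mathcal{Q}$ whose $n$-th component is $\sum_{j=0}^n a_jx^{n-j}$. *)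

theory Defs
  imports "HOL-Computational_Algebra.Polynomial" "HOL-Computational_Algebra.Formal_Power_Series"
begin

type_synonym qseq = "nat \<Rightarrow> real poly"

definition qmul :: "qseq \<Rightarrow> qseq \<Rightarrow> qseq" where
  "qmul P Q = (\<lambda>k. \<Sum>j\<le>degree (Q k). smult (coeff (Q k) j) (P j))"

definition qadd :: "qseq \<Rightarrow> qseq \<Rightarrow> qseq" where
  "qadd P Q = (\<lambda>k. P k + Q k)"

definition qscale :: "real \<Rightarrow> qseq \<Rightarrow> qseq" where
  "qscale c P = (\<lambda>k. smult c (P k))"

definition qE :: qseq where "qE = (\<lambda>n. monom 1 n)"
definition qF :: qseq where "qF = (\<lambda>n. monom 1 (Suc n))"
definition qD :: qseq where "qD = (\<lambda>n. if n = 0 then 0 else monom 1 (n - 1))"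

definition qseries_D :: "real fps \<Rightarrow> qseq" where
  "qseries_D \<psi> = (\<lambda>n. \<Sum>j\<le>n. monom (fps_nth \<psi> j) (n - j))"

end

theory Submission
  imports Defs
begin

text \<open>
  Read componentwise, the equation determines \<open>(1 + \<sigma> t) H (n + 1)\<close> from \<open>H 0, \<dots>, H n\<close>,
  except that the quadratic term contributes \<open>H (n + 1)\<close> times the coefficient of
  \<open>x^(n + 1)\<close> in \<open>H n\<close>. For the proposed solution \<open>H n\<close> has degree at most \<open>n + 1\<close> and
  this coefficient is \<open>\<sigma> / (1 + \<sigma> t)\<close> for \<open>n \<ge> 1\<close>, so \<open>H (n + 1)\<close> enters with net
  coefficient \<open>1 - \<sigma> \<tau> \<noteq> 0\<close> and solutions with \<open>H 0 = 0\<close> are unique. That the proposed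
  sequence is a solution is a computation in which \<open>\<psi> \<mapsto> \<psi>(D)\<close> turns products of power
  series into composition, and \<open>\<phi>(D) D\<close> moves past \<open>E + \<eta> F + \<sigma> F\<^sup>2\<close> at the cost of a
  correction \<open>\<sigma> F\<close>; what remains is the quadratic equation for \<open>\<phi>\<close>.
\<close>

lemma smult_sum_right: "smult c (\<Sum>i\<in>A. f i) = (\<Sum>i\<in>A. smult c (f i))"
  by (induction A rule: infinite_finite_induct) (auto simp: smult_add_right)

lemma coeff_pCons_0_smult: "coeff (pCons 0 (smult c p)) m = c * coeff (pCons 0 p) m"
  by (cases m) auto

lemma coeff_pCons_0_uminus: "coeff (pCons 0 (- p)) m = - coeff (pCons 0 p) m"
  by (cases m) auto

definition qapply :: "qseq \<Rightarrow> real poly \<Rightarrow> real poly" where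
  "qapply P q = (\<Sum>j\<le>degree q. smult (coeff q j) (P j))"

lemma qmul_eq_qapply: "qmul P Q k = qapply P (Q k)"
  by (simp add: qmul_def qapply_def)

lemma qapply_eq_sum_atMost:
  assumes "degree q \<le> N"
  shows "qapply P q = (\<Sum>j\<le>N. smult (coeff q j) (P j))"
proof -
  have "(\<Sum>j\<le>N. smult (coeff q j) (P j))
      = (\<Sum>j\<le>degree q. smult (coeff q j) (P j)) + (\<Sum>j\<in>{degree q<..N}. smult (coeff q j) (P j))"
    using assms by (subst sum.union_disjoint[symmetric]) (auto intro!: sum.cong simp: ivl_disj_un)
  also have "(\<Sum>j\<in>{degree q<..N}. smult (coeff q j) (P j)) = 0"
    by (intro sum.neutral) (auto simp: coeff_eq_0)
  finally show ?thesis by (simp add: qapply_def)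
qed

lemma qapply_add: "qapply P (p + q) = qapply P p + qapply P q"
proof -
  define N where "N = max (degree p) (degree q)"
  have "degree (p + q) \<le> N"
    unfolding N_def by (rule degree_add_le) auto
  then show ?thesis
    by (simp add: qapply_eq_sum_atMost[of _ N] N_def sum.distrib smult_add_left)
qed

lemma qapply_smult: "qapply P (smult c p) = smult c (qapply P p)"
  by (simp add: qapply_eq_sum_atMost[of "smult c p" "degree p"] qapply_def smult_sum_right
      mult.commute)

lemma qapply_0 [simp]: "qapply P 0 = 0"
  by (simp add: qapply_def)

lemma qapply_sum: "finite A \<Longrightarrow> qapply P (\<Sum>i\<in>A. f i) = (\<Sum>i\<in>A. qapply P (f i))"
  by (induction A rule: finite_induct) (auto simp: qapply_add)

lemma qapply_monom: "qapply P (monom c n) = smult c (P n)"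
proof -
  have "qapply P (monom c n) = (\<Sum>j\<le>n. smult (coeff (monom c n) j) (P j))"
    by (rule qapply_eq_sum_atMost) (rule degree_monom_le)
  also have "\<dots> = (\<Sum>j\<le>n. if j = n then smult c (P j) else 0)"
    by (intro sum.cong) (auto simp: coeff_monom)
  finally show ?thesis by simp
qed

lemma qapply_pCons_0: "qapply P (pCons 0 q) = qapply (\<lambda>n. P (Suc n)) q"
proof -
  have "qapply P (pCons 0 q) = (\<Sum>j\<le>Suc (degree q). smult (coeff (pCons 0 q) j) (P j))"
    by (rule qapply_eq_sum_atMost) (simp add: degree_pCons_le)
  also have "\<dots> = qapply (\<lambda>n. P (Suc n)) q"
    by (subst sum.atMost_Suc_shift) (simp add: qapply_def)
  finally show ?thesis .
qed

lemma qapply_add_seq: "qapply (\<lambda>n. P n + Q n) q = qapply P q + qapply Q q"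
  by (simp add: qapply_def smult_add_right sum.distrib)

lemma qapply_smult_seq: "qapply (\<lambda>n. smult c (P n)) q = smult c (qapply P q)"
  by (simp add: qapply_def smult_sum_right mult.commute)

lemma qapply_mult_seq: "qapply (\<lambda>n. p * P n) q = p * qapply P q"
  by (simp add: qapply_def sum_distrib_left)

lemma qapply_monom_seq: "qapply (\<lambda>n. monom c n) q = smult c q"
proof -
  have "qapply (\<lambda>n. monom c n) q = smult c (\<Sum>j\<le>degree q. monom (coeff q j) j)"
    by (simp add: qapply_def smult_sum_right smult_monom mult.commute)
  then show ?thesis by (simp add: poly_as_sum_of_monoms)
qed

lemma coeff_qseries_D: "coeff (qseries_D f n) m = (if m \<le> n then fps_nth f (n - m) else 0)"
proof -
  have "coeff (qseries_D f n) m = (\<Sum>j\<le>n. if j = n - m \<and> m \<le> n then fps_nth f j else 0)"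
    unfolding qseries_D_def coeff_sum by (intro sum.cong) (auto simp: coeff_monom)
  then show ?thesis
    by (cases "m \<le> n") (auto simp: sum.delta)
qed

lemma qseries_D_add: "qseries_D (f + g) n = qseries_D f n + qseries_D g n"
  by (simp add: poly_eq_iff coeff_qseries_D)

lemma qseries_D_const_mult: "qseries_D (fps_const c * f) n = smult c (qseries_D f n)"
  by (simp add: poly_eq_iff coeff_qseries_D)

lemma qseries_D_const: "qseries_D (fps_const c) n = monom c n"
  by (auto simp: poly_eq_iff coeff_qseries_D coeff_monom)

lemma qseries_D_Suc:
  "qseries_D f (Suc n) = monom (fps_nth f 0) (Suc n) + qseries_D (fps_shift 1 f) n"
  by (auto simp: poly_eq_iff coeff_qseries_D coeff_monom Suc_diff_le)

lemma qseries_D_times_fps_X: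
  "qseries_D (f * fps_X) n = (if n = 0 then 0 else qseries_D f (n - 1))"
  by (auto simp: poly_eq_iff coeff_qseries_D Suc_diff_le)

lemma qapply_qseries_D_add:
  "qapply (qseries_D (f + g)) q = qapply (qseries_D f) q + qapply (qseries_D g) q"
  by (simp add: qapply_def qseries_D_add smult_add_right sum.distrib)

lemma qapply_qseries_D_const_mult:
  "qapply (qseries_D (fps_const c * f)) q = smult c (qapply (qseries_D f) q)"
  by (simp add: qapply_def qseries_D_const_mult smult_sum_right mult.commute[of c])

lemma qapply_qseries_D_pCons_0:
  "qapply (qseries_D f) (pCons 0 q)
     = qapply (qseries_D (fps_shift 1 f)) q + smult (fps_nth f 0) (pCons 0 q)"
proof -
  have "qapply (\<lambda>n. monom (fps_nth f 0) (Suc n)) q = smult (fps_nth f 0) (pCons 0 q)"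
    by (simp flip: qapply_monom_seq add: qapply_pCons_0)
  then show ?thesis
    by (simp add: qapply_pCons_0 qseries_D_Suc qapply_add_seq)
qed

lemma qapply_qseries_D_mult: "qapply (qseries_D f) (qseries_D g n) = qseries_D (f * g) n"
proof -
  have "qapply (qseries_D f) (qseries_D g n) = (\<Sum>j\<le>n. smult (fps_nth g j) (qseries_D f (n - j)))"
    unfolding qseries_D_def[of g] by (simp add: qapply_sum qapply_monom)
  also have "\<dots> = qseries_D (f * g) n"
  proof (rule poly_eqI)
    fix m
    have "coeff (\<Sum>j\<le>n. smult (fps_nth g j) (qseries_D f (n - j))) m
        = (\<Sum>j\<le>n. if j \<le> n - m \<and> m \<le> n then fps_nth g j * fps_nth f (n - m - j) else 0)"
      unfolding coeff_sum by (intro sum.cong) (auto simp: coeff_qseries_D diff_commute add.commute)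
    also have "\<dots> = (if m \<le> n then (\<Sum>j\<le>n - m. fps_nth g j * fps_nth f (n - m - j)) else 0)"
      by (auto intro!: sum.mono_neutral_cong_right split: if_split_asm)
    also have "\<dots> = coeff (qseries_D (f * g) n) m"
      by (simp add: coeff_qseries_D fps_mult_nth mult.commute[of f] atLeast0AtMost)
    finally show "coeff (\<Sum>j\<le>n. smult (fps_nth g j) (qseries_D f (n - j))) m
        = coeff (qseries_D (f * g) n) m" .
  qed
  finally show ?thesis .
qed

lemma qapply_qseries_D_times_fps_X_commute:
  assumes "fps_nth \<phi> 0 = 1"
  shows "qapply (qseries_D (\<phi> * fps_X)) ([:1, \<eta>, \<sigma>:] * q)
     = qapply (qseries_D (\<phi> * fps_X + fps_const \<eta> * \<phi> + fps_const \<sigma> * fps_shift 1 \<phi>)) q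
       + smult \<sigma> (pCons 0 q)"
  using assms
  by (simp add: qapply_add qapply_smult qapply_qseries_D_pCons_0 qapply_qseries_D_add
      qapply_qseries_D_const_mult fps_shift_times_fps_X'[unfolded One_nat_def])

lemma qmul_qF_right: "qmul H qF n = H (Suc n)"
  by (simp add: qmul_eq_qapply qF_def qapply_monom)

lemma qmul_qF_left: "qmul qF H n = pCons 0 (H n)"
  using qapply_pCons_0[of "\<lambda>n. monom 1 n" "H n"]
  by (simp add: qmul_eq_qapply qF_def qapply_monom_seq)

lemma qmul_qD_right: "qmul H qD n = (if n = 0 then 0 else H (n - 1))"
  by (simp add: qmul_eq_qapply qD_def qapply_monom)

lemma qE_qF_quadratic_eq:
  "qadd (qadd qE (qscale \<eta> qF)) (qscale \<sigma> (qmul qF qF)) = (\<lambda>n. [:1, \<eta>, \<sigma>:] * monom 1 n)"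
proof -
  have "qmul qF qF n = monom 1 (Suc (Suc n))" for n
    by (subst qmul_qF_right) (simp add: qF_def)
  then show ?thesis
    by (simp add: fun_eq_iff qadd_def qscale_def qE_def qF_def monom_Suc smult_monom)
qed

definition riccati_solution :: "real \<Rightarrow> real \<Rightarrow> real \<Rightarrow> real fps \<Rightarrow> qseq" where
  "riccati_solution c \<eta> \<sigma> \<phi> = (\<lambda>n. smult c ([:1, \<eta>, \<sigma>:] * qseries_D (\<phi> * fps_X) n))"

lemma qmul_poly_mult_left: "qmul (\<lambda>n. p * monom 1 n) Q = (\<lambda>n. p * Q n)"
  by (simp add: fun_eq_iff qmul_eq_qapply qapply_mult_seq qapply_monom_seq)

lemma riccati_solution_eq_qmul:
  "qscale c (qmul (qmul (qadd (qadd qE (qscale \<eta> qF)) (qscale \<sigma> (qmul qF qF))) (qseries_D \<phi>)) qD)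
     = riccati_solution c \<eta> \<sigma> \<phi>"
  unfolding qE_qF_quadratic_eq qmul_poly_mult_left
  by (simp add: fun_eq_iff riccati_solution_def qscale_def qmul_qD_right qseries_D_times_fps_X)

lemma riccati_solution_0: "riccati_solution c \<eta> \<sigma> \<phi> 0 = 0"
  by (simp add: riccati_solution_def qseries_D_times_fps_X)

lemma coeff_riccati_solution:
  "coeff (riccati_solution c \<eta> \<sigma> \<phi> n) (Suc n + k)
     = (if k = 0 \<and> n \<noteq> 0 then c * \<sigma> * fps_nth \<phi> 0 else 0)"
  by (cases n) (auto simp: riccati_solution_def coeff_pCons coeff_qseries_D qseries_D_times_fps_X
      split: nat.split)

lemma degree_riccati_solution: "degree (riccati_solution c \<eta> \<sigma> \<phi> n) \<le> Suc n"
proof (rule degree_le, intro allI impI)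
  fix i assume "Suc n < i"
  then obtain k where "i = Suc n + Suc k" by (metis less_imp_Suc_add add_Suc_right)
  then show "coeff (riccati_solution c \<eta> \<sigma> \<phi> n) i = 0"
    by (simp only: coeff_riccati_solution) simp
qed

lemma quadratic_equation_fixed_point:
  fixes \<phi> :: "real fps"
  assumes "fps_nth \<phi> 0 = 1"
    and quad: "(fps_X ^ 2 + fps_const \<eta> * fps_X + fps_const \<sigma>) * fps_const (t + \<tau>) * \<phi> ^ 2
         + (fps_const (\<theta> - t * \<eta>) * fps_X - fps_const (2 * t * \<sigma> + \<sigma> * \<tau> + 1)) * \<phi>
         + fps_const (t * \<sigma> + 1) = 0"
  shows "fps_const (1 + \<sigma> * t) * \<phi> = fps_const (1 + \<sigma> * t) + fps_const (\<theta> - \<eta> * t) * (\<phi> * fps_X)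
      + fps_const (t + \<tau>) * ((\<phi> * fps_X + fps_const \<eta> * \<phi> + fps_const \<sigma> * fps_shift 1 \<phi>) * (\<phi> * fps_X))"
proof -
  have "fps_shift 1 \<phi> * fps_X = \<phi> - 1"
    using assms(1) by (intro fps_ext) auto
  moreover have "(\<phi> * fps_X + fps_const \<eta> * \<phi> + fps_const \<sigma> * fps_shift 1 \<phi>) * (\<phi> * fps_X)
      = \<phi>\<^sup>2 * fps_X\<^sup>2 + fps_const \<eta> * \<phi>\<^sup>2 * fps_X + fps_const \<sigma> * \<phi> * (fps_shift 1 \<phi> * fps_X)"
    by (simp add: algebra_simps power2_eq_square)
  ultimately have product: "(\<phi> * fps_X + fps_const \<eta> * \<phi> + fps_const \<sigma> * fps_shift 1 \<phi>) * (\<phi> * fps_X)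
      = \<phi>\<^sup>2 * fps_X\<^sup>2 + fps_const \<eta> * \<phi>\<^sup>2 * fps_X + fps_const \<sigma> * \<phi> * (\<phi> - 1)"
    by simp
  show ?thesis
    using quad unfolding product
    by (simp only: fps_const_1_eq_1 flip: fps_const_add fps_const_mult fps_const_sub
        fps_numeral_fps_const) algebra
qed

lemma riccati_solution_solves:
  fixes \<eta> \<theta> \<sigma> \<tau> t :: real and \<phi> :: "real fps"
  defines "s \<equiv> 1 + \<sigma> * t" and "T \<equiv> t + \<tau>" and "H \<equiv> riccati_solution (1 / (1 + \<sigma> * t)) \<eta> \<sigma> \<phi>"
  assumes "s \<noteq> 0" and "fps_nth \<phi> 0 = 1"
    and "(fps_X ^ 2 + fps_const \<eta> * fps_X + fps_const \<sigma>) * fps_const (t + \<tau>) * \<phi> ^ 2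
         + (fps_const (\<theta> - t * \<eta>) * fps_X - fps_const (2 * t * \<sigma> + \<sigma> * \<tau> + 1)) * \<phi>
         + fps_const (t * \<sigma> + 1) = 0"
  shows "smult s (H (Suc n)) = [:1, \<eta>, \<sigma>:] * monom 1 n + smult (\<theta> - \<eta> * t) (H n)
           + smult (- (\<sigma> * T)) (pCons 0 (H n)) + smult (T * s) (qapply H (H n))"
proof -
  define a where "a = [:1, \<eta>, \<sigma>:]"
  define \<psi> where "\<psi> = \<phi> * fps_X"
  define g where "g = \<psi> + fps_const \<eta> * \<phi> + fps_const \<sigma> * fps_shift 1 \<phi>"
  define K where "K = qseries_D \<psi> n"
  have H_eq: "H = (\<lambda>n. smult (1 / s) (a * qseries_D \<psi> n))"
    by (simp only: H_def s_def riccati_solution_def a_def \<psi>_def)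
  have H_Suc: "H (Suc n) = smult (1 / s) (a * qseries_D \<phi> n)"
    by (simp add: H_eq \<psi>_def qseries_D_times_fps_X)
  have comm: "qapply (qseries_D \<psi>) (a * K) = qseries_D (g * \<psi>) n + smult \<sigma> (pCons 0 K)"
    unfolding a_def \<psi>_def g_def K_def
    by (simp only: qapply_qseries_D_times_fps_X_commute[OF assms(5)] qapply_qseries_D_mult)
  have HH: "qapply H (H n) = smult (1 / s) (a * smult (1 / s) (qseries_D (g * \<psi>) n + smult \<sigma> (pCons 0 K)))"
    by (simp only: H_eq K_def qapply_smult_seq qapply_mult_seq qapply_smult comm[unfolded K_def])
  have "qseries_D (fps_const s * \<phi>) n = qseries_D (fps_const s + fps_const (\<theta> - \<eta> * t) * \<psi> + fps_const T * (g * \<psi>)) n"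
    using quadratic_equation_fixed_point[OF assms(5,6)] by (simp add: s_def T_def g_def \<psi>_def)
  then have rel: "smult s (qseries_D \<phi> n) = monom s n + smult (\<theta> - \<eta> * t) K + smult T (qseries_D (g * \<psi>) n)"
    by (simp add: qseries_D_add qseries_D_const_mult qseries_D_const K_def)
  have H_n: "H n = smult (1 / s) (a * K)"
    by (simp only: H_eq K_def)
  show ?thesis
  proof (rule poly_eqI)
    fix m
    have monom_s: "coeff (a * monom s n) m = s * coeff (a * monom 1 n) m"
      by (metis coeff_smult mult_smult_right smult_monom mult.right_neutral)
    have "s * coeff (a * qseries_D \<phi> n) m = s * coeff (a * monom 1 n) m
        + (\<theta> - \<eta> * t) * coeff (a * K) m + T * coeff (a * qseries_D (g * \<psi>) n) m"
      using arg_cong[OF rel, of "\<lambda>p. coeff (a * p) m"] monom_s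
      by (simp add: algebra_simps)
    then show "coeff (smult s (H (Suc n))) m = coeff ([:1, \<eta>, \<sigma>:] * monom 1 n + smult (\<theta> - \<eta> * t) (H n)
           + smult (- (\<sigma> * T)) (pCons 0 (H n)) + smult (T * s) (qapply H (H n))) m"
      unfolding HH unfolding H_Suc H_n a_def[symmetric] using assms(4)
      by (simp add: algebra_simps field_simps coeff_pCons_0_smult coeff_pCons_0_uminus)
  qed
qed

lemma qseq_recursion_unique:
  fixes G H :: qseq
  assumes G: "\<And>n. smult c (G (Suc n)) = f n (G n) + smult d (qapply G (G n))"
    and H: "\<And>n. smult c (H (Suc n)) = f n (H n) + smult d (qapply H (H n))"
    and "G 0 = H 0"
    and degree_H: "\<And>n. degree (H n) \<le> Suc n"
    and nondegenerate: "\<And>n. c \<noteq> d * coeff (H n) (Suc n)"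
  shows "G = H"
proof -
  have "\<forall>j\<le>n. G j = H j" for n
  proof (induction n)
    case 0
    then show ?case using \<open>G 0 = H 0\<close> by simp
  next
    case (Suc n)
    define l where "l = coeff (H n) (Suc n)"
    have "qapply G (H n) - qapply H (H n) = (\<Sum>j\<le>Suc n. smult (coeff (H n) j) (G j - H j))"
      by (simp add: qapply_eq_sum_atMost[OF degree_H] sum_subtractf smult_diff_right)
    also have "\<dots> = smult l (G (Suc n) - H (Suc n))"
      using Suc.IH by (simp add: l_def)
    finally have difference: "qapply G (H n) - qapply H (H n) = smult l (G (Suc n) - H (Suc n))" .
    have "smult c (G (Suc n) - H (Suc n)) = smult d (qapply G (H n) - qapply H (H n))"
      using G[of n] H[of n] Suc.IH by (simp add: smult_diff_right)
    then have "smult (c - d * l) (G (Suc n) - H (Suc n)) = 0"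
      unfolding difference by (simp add: smult_diff_left)
    then have "G (Suc n) = H (Suc n)"
      using nondegenerate[of n] by (simp add: l_def)
    then show ?case
      using Suc.IH le_Suc_eq by auto
  qed
  then show ?thesis by auto
qed

lemma riccati_equation_iff:
  "qscale c0 (qmul H qF) = qadd (qadd (qadd (qadd (qadd qE (qscale \<eta> qF)) (qscale \<sigma> (qmul qF qF)))
       (qscale c1 H)) (qscale c2 (qmul qF H))) (qscale c3 (qmul H H))
   \<longleftrightarrow> (\<forall>n. smult c0 (H (Suc n)) = [:1, \<eta>, \<sigma>:] * monom 1 n + smult c1 (H n)
       + smult c2 (pCons 0 (H n)) + smult c3 (qapply H (H n)))"
  unfolding qE_qF_quadratic_eq
  by (simp only: fun_eq_iff qadd_def qscale_def qmul_qF_right qmul_qF_left) (simp only: qmul_eq_qapply)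

theorem lemma3p1:
  fixes \<eta> \<theta> \<sigma> \<tau> t :: real and \<phi> :: "real fps" and H :: qseq
  assumes "\<sigma> \<ge> 0" and "\<tau> \<ge> 0" and "\<sigma> * \<tau> \<noteq> 1" and "t > 0"
    and "fps_nth \<phi> 0 = 1"
    and "(fps_X ^ 2 + fps_const \<eta> * fps_X + fps_const \<sigma>) * fps_const (t + \<tau>) * \<phi> ^ 2
         + (fps_const (\<theta> - t * \<eta>) * fps_X - fps_const (2 * t * \<sigma> + \<sigma> * \<tau> + 1)) * \<phi>
         + fps_const (t * \<sigma> + 1) = 0"
    and "H 0 = 0"
  shows "qscale (1 + \<sigma> * t) (qmul H qF) =
           qadd (qadd (qadd (qadd (qadd qE (qscale \<eta> qF)) (qscale \<sigma> (qmul qF qF)))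
             (qscale (\<theta> - \<eta> * t) H))
             (qscale (- (\<sigma> * (t + \<tau>))) (qmul qF H)))
             (qscale ((t + \<tau>) * (1 + \<sigma> * t)) (qmul H H))
         \<longleftrightarrow>
         H = qscale (1 / (1 + \<sigma> * t))
               (qmul (qmul (qadd (qadd qE (qscale \<eta> qF)) (qscale \<sigma> (qmul qF qF))) (qseries_D \<phi>)) qD)"
proof -
  let ?H = "riccati_solution (1 / (1 + \<sigma> * t)) \<eta> \<sigma> \<phi>"
  have "1 + \<sigma> * t > 0"
    using assms(1,4) by (simp add: add_pos_nonneg)
  have "(t + \<tau>) * (1 + \<sigma> * t) * coeff (?H n) (Suc n) = (if n = 0 then 0 else \<sigma> * (t + \<tau>))" for n
    using coeff_riccati_solution[of "1 / (1 + \<sigma> * t)" \<eta> \<sigma> \<phi> n 0] \<open>1 + \<sigma> * t > 0\<close> assms(5)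
    by simp
  then have nondegenerate: "1 + \<sigma> * t \<noteq> (t + \<tau>) * (1 + \<sigma> * t) * coeff (?H n) (Suc n)" for n
    using \<open>1 + \<sigma> * t > 0\<close> assms(3) by (simp add: algebra_simps)
  have solves: "\<forall>n. smult (1 + \<sigma> * t) (?H (Suc n)) = [:1, \<eta>, \<sigma>:] * monom 1 n
      + smult (\<theta> - \<eta> * t) (?H n) + smult (- (\<sigma> * (t + \<tau>))) (pCons 0 (?H n))
      + smult ((t + \<tau>) * (1 + \<sigma> * t)) (qapply ?H (?H n))"
    using riccati_solution_solves[OF _ assms(5,6)] \<open>1 + \<sigma> * t > 0\<close> by simp
  show ?thesis
    unfolding riccati_equation_iff riccati_solution_eq_qmul
  proof
    assume "\<forall>n. smult (1 + \<sigma> * t) (H (Suc n)) = [:1, \<eta>, \<sigma>:] * monom 1 n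
      + smult (\<theta> - \<eta> * t) (H n) + smult (- (\<sigma> * (t + \<tau>))) (pCons 0 (H n))
      + smult ((t + \<tau>) * (1 + \<sigma> * t)) (qapply H (H n))"
    with solves show "H = ?H"
      by (intro qseq_recursion_unique[where f = "\<lambda>n p. [:1, \<eta>, \<sigma>:] * monom 1 n
          + smult (\<theta> - \<eta> * t) p + smult (- (\<sigma> * (t + \<tau>))) (pCons 0 p)"
          and c = "1 + \<sigma> * t" and d = "(t + \<tau>) * (1 + \<sigma> * t)"])
        (simp_all add: assms(7) riccati_solution_0 degree_riccati_solution nondegenerate)
  qed (use solves in simp)
qed

end
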